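(* Let $r\ge2$, $d_1=1$, $\lambda_1=0$, $d_i\ge2$ integers and $\lambda_i>0$ for $i=2,\dots,r$, $n=\sum_id_i$. In $\mathbb R^{2r-1}$ with coordinates $(X_1,\dots,X_r,Y_2,\dots,Y_r)$ let $\mathcal L=\sum_{i=1}^rX_i^2+\sum_{i=2}^r\lambda_iY_i^2-1$, $\mathcal H=\sum_{i=1}^r\sqrt{d_i}X_i$, $\mathcal D=\{\mathcal L=0,\ \mathcal H=1\}\cap\{Y_i>0\ (i\ge2),\ |X_1-1|<\sqrt2\}$, and $$\hat{\mathscr F}=\frac{1-\frac{1}{n-1}(1-X_1)^2}{\prod_{i=2}^r\big(\sqrt{\lambda_i}\,Y_i\big)^{\frac{2d_i}{n-1}}}.$$ Then $\hat{\mathscr F}$, restricted to $\mathcal D$ (an open subset of the smooth submanifold $\{\mathcal L=0,\mathcal H=1\}$), has a unique critical point in $\mathcal D$, and this point is the global minimum point of $\hat{\mathscr F}$ on $\mathcal D$. *)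

theory Defs
  imports "HOL-Analysis.Analysis"
begin

text \<open>A point of R^(2r-1) with coordinates (X_1..X_r, Y_2..Y_r) is represented as a pair
  (X, Y) of functions nat => real, with X i = 0 for i outside {1..r} and Y i = 0 for
  i outside {2..r} (so that the representation is unique).\<close>

type_synonym pt = "(nat \<Rightarrow> real) \<times> (nat \<Rightarrow> real)"

definition coord_space :: "nat \<Rightarrow> pt set" where
  "coord_space r = {(X, Y). (\<forall>i. i \<notin> {1..r} \<longrightarrow> X i = 0) \<and> (\<forall>i. i \<notin> {2..r} \<longrightarrow> Y i = 0)}"

definition pt_line :: "pt \<Rightarrow> pt \<Rightarrow> real \<Rightarrow> pt" where
  "pt_line p v t = ((\<lambda>i. fst p i + t * fst v i), (\<lambda>i. snd p i + t * snd v i))"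

definition LL :: "nat \<Rightarrow> (nat \<Rightarrow> real) \<Rightarrow> pt \<Rightarrow> real" where
  "LL r lam p = (\<Sum>i=1..r. (fst p i)\<^sup>2) + (\<Sum>i=2..r. lam i * (snd p i)\<^sup>2) - 1"

definition HH :: "nat \<Rightarrow> (nat \<Rightarrow> nat) \<Rightarrow> pt \<Rightarrow> real" where
  "HH r d p = (\<Sum>i=1..r. sqrt (real (d i)) * fst p i)"

definition DD :: "nat \<Rightarrow> (nat \<Rightarrow> nat) \<Rightarrow> (nat \<Rightarrow> real) \<Rightarrow> pt set" where
  "DD r d lam = {p \<in> coord_space r. LL r lam p = 0 \<and> HH r d p = 1 \<and>
      (\<forall>i\<in>{2..r}. snd p i > 0) \<and> \<bar>fst p 1 - 1\<bar> < sqrt 2}"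

definition FF :: "nat \<Rightarrow> (nat \<Rightarrow> nat) \<Rightarrow> (nat \<Rightarrow> real) \<Rightarrow> pt \<Rightarrow> real" where
  "FF r d lam p =
     (let n = (\<Sum>i=1..r. d i) in
      (1 - (1 - fst p 1)\<^sup>2 / (real n - 1)) /
      (\<Prod>i=2..r. (sqrt (lam i) * snd p i) powr (2 * real (d i) / (real n - 1))))"

text \<open>Critical point of f restricted to the submanifold {L = 0, H = 1}: the differential of f
  vanishes on the tangent space, i.e. on all vectors v of R^(2r-1) with dL(p) v = 0 and
  dH(p) v = 0; differentials applied to v are expressed as directional derivatives
  d/dt g(p + t v) at t = 0.\<close>
definition crit_on_level :: "nat \<Rightarrow> (nat \<Rightarrow> nat) \<Rightarrow> (nat \<Rightarrow> real) \<Rightarrow> (pt \<Rightarrow> real) \<Rightarrow> pt \<Rightarrow> bool" where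
  "crit_on_level r d lam f p \<longleftrightarrow>
     p \<in> DD r d lam \<and>
     (\<forall>v \<in> coord_space r.
        ((\<lambda>t. LL r lam (pt_line p v t)) has_real_derivative 0) (at 0) \<and>
        ((\<lambda>t. HH r d (pt_line p v t)) has_real_derivative 0) (at 0) \<longrightarrow>
        ((\<lambda>t. f (pt_line p v t)) has_real_derivative 0) (at 0))"

end

theory Submission
  imports Defs
begin

text \<open>Put N = n - 1 = d_2 + ... + d_r, w_i = d_i / N and S = sum of lam_i Y_i^2 over i \<ge> 2.
  On D, Cauchy-Schwarz applied to the constraint H = 1 bounds the numerator of F from below by S,
  and weighted AM-GM bounds the denominator, the product of (lam_i Y_i^2)^w_i, by S times the
  product of w_i^w_i. Hence F is at least the reciprocal of that product, with equality at the
  point X_1 = 0, X_i = sqrt d_i / N, lam_i Y_i^2 = (N - 1) d_i / N^2, which is critical.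
  Conversely, testing the critical-point condition against tangent vectors supported on two
  coordinates forces X_i to be proportional to sqrt d_i and lam_i Y_i^2 to d_i for i \<ge> 2; the
  two constraints then leave X_1 = 0 or X_1 = 1 - N, and |X_1 - 1| < sqrt 2 rules out the latter.\<close>

lemma weighted_arith_geom_mean:
  fixes a w :: "'a \<Rightarrow> real"
  assumes "finite A" and a: "\<And>i. i \<in> A \<Longrightarrow> a i > 0" and w: "\<And>i. i \<in> A \<Longrightarrow> w i \<ge> 0"
    and w1: "(\<Sum>i\<in>A. w i) = 1"
  shows "(\<Prod>i\<in>A. a i powr w i) \<le> (\<Sum>i\<in>A. w i * a i)"
proof -
  obtain j where j: "j \<in> A" "w j \<noteq> 0"
    using w1 by (metis sum.neutral zero_neq_one)
  have pos: "(\<Sum>i\<in>A. w i * a i) > 0"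
  proof (rule sum_pos2[OF assms(1) j(1)])
    show "0 < w j * a j" using j a[of j] w[of j] by simp
    show "\<And>i. i \<in> A \<Longrightarrow> 0 \<le> w i * a i" using a w by (simp add: less_imp_le)
  qed
  have "(\<Sum>i\<in>A. w i * ln (a i)) \<le> ln (\<Sum>i\<in>A. w i * a i)"
    using concave_on_sum[OF assms(1) _ ln_concave w1] a w j by auto
  then have "exp (\<Sum>i\<in>A. w i * ln (a i)) \<le> (\<Sum>i\<in>A. w i * a i)"
    using pos by (simp add: ln_ge_iff)
  moreover have "(\<Prod>i\<in>A. a i powr w i) = exp (\<Sum>i\<in>A. w i * ln (a i))"
    using a by (simp add: exp_sum assms(1) powr_def mult.commute less_imp_neq[symmetric] cong: prod.cong)
  ultimately show ?thesis by simp
qed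

lemma powr_sqrt_mult:
  fixes l z e :: real
  assumes "l > 0" "z > 0"
  shows "(sqrt l * z) powr (2 * e) = (l * z\<^sup>2) powr e"
  using assms by (simp add: powr_def ln_mult ln_sqrt power2_eq_square algebra_simps)

lemma sum_mult_delta:
  fixes c :: "'a \<Rightarrow> 'b::semiring_0"
  assumes "finite S" "i \<in> S"
  shows "(\<Sum>k\<in>S. c k * (if k = i then a else 0)) = c i * a"
  using assms by (simp add: if_distrib[where f="\<lambda>x. c _ * x"] cong: if_cong)

lemma sum_mult_two_deltas:
  fixes c :: "'a \<Rightarrow> 'b::semiring_0"
  assumes "finite S" "i \<in> S" "j \<in> S"
  shows "(\<Sum>k\<in>S. c k * ((if k = i then a else 0) + (if k = j then b else 0))) = c i * a + c j * b"
  using assms by (simp add: distrib_left sum.distrib sum_mult_delta)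

lemma LL_line_has_real_derivative:
  "((\<lambda>t. LL r lam (pt_line p v t)) has_real_derivative
     2 * ((\<Sum>i=1..r. fst p i * fst v i) + (\<Sum>i=2..r. lam i * snd p i * snd v i))) (at 0)"
  unfolding LL_def pt_line_def
  by (auto intro!: derivative_eq_intros simp: power2_eq_square algebra_simps sum_distrib_left)

lemma HH_line_has_real_derivative:
  "((\<lambda>t. HH r d (pt_line p v t)) has_real_derivative (\<Sum>i=1..r. sqrt (real (d i)) * fst v i)) (at 0)"
  unfolding HH_def pt_line_def
  by (auto intro!: derivative_eq_intros simp: mult.commute)

lemma has_real_derivative_zero_iff:
  "(f has_real_derivative D) (at x) \<Longrightarrow> (f has_real_derivative 0) (at x) \<longleftrightarrow> D = 0"
  by (metis DERIV_unique)

locale level_set_data =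
  fixes r :: nat and d :: "nat \<Rightarrow> nat" and lam :: "nat \<Rightarrow> real"
  assumes r_ge_2: "r \<ge> 2" and d_1: "d 1 = 1"
    and d_ge_2: "\<And>i. i \<in> {2..r} \<Longrightarrow> d i \<ge> 2"
    and lam_pos: "\<And>i. i \<in> {2..r} \<Longrightarrow> lam i > 0"
begin

definition N :: real where "N = (\<Sum>i=2..r. real (d i))"

definition numer :: "pt \<Rightarrow> real" where "numer p = 1 - (1 - fst p 1)\<^sup>2 / N"

definition denom :: "pt \<Rightarrow> real" where
  "denom p = (\<Prod>i=2..r. (sqrt (lam i) * snd p i) powr (2 * real (d i) / N))"

lemma sum_split_first: "(\<Sum>i=1..r. f i) = f 1 + (\<Sum>i=2..r. f i)"
proof -
  have "{1..r} = insert 1 {2..r}" using r_ge_2 by auto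
  then show ?thesis by simp
qed

lemma sum_degrees_minus_one: "real (\<Sum>i=1..r. d i) - 1 = N"
  unfolding N_def of_nat_sum sum_split_first d_1 by simp

lemma N_ge_2: "N \<ge> 2"
proof -
  have "real (d 2) \<le> N"
    unfolding N_def by (rule member_le_sum) (use r_ge_2 in auto)
  then show ?thesis using d_ge_2[of 2] r_ge_2 by simp
qed

lemma sum_scaled_degrees: "(\<Sum>i=2..r. c * real (d i)) = c * N"
  by (simp add: N_def sum_distrib_left)

lemma FF_eq: "FF r d lam p = numer p / denom p"
  unfolding FF_def numer_def denom_def Let_def sum_degrees_minus_one ..

lemma mem_DD_iff:
  "(X, Y) \<in> DD r d lam \<longleftrightarrow> (X, Y) \<in> coord_space r \<and>
     (X 1)\<^sup>2 + (\<Sum>i=2..r. (X i)\<^sup>2) + (\<Sum>i=2..r. lam i * (Y i)\<^sup>2) = 1 \<and>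
     X 1 + (\<Sum>i=2..r. sqrt (real (d i)) * X i) = 1 \<and>
     (\<forall>i\<in>{2..r}. Y i > 0) \<and> \<bar>X 1 - 1\<bar> < sqrt 2"
  unfolding DD_def LL_def HH_def sum_split_first d_1 by (simp add: add.assoc)

lemma DD_constraints:
  assumes "(X, Y) \<in> DD r d lam"
  shows "(X 1)\<^sup>2 + (\<Sum>i=2..r. (X i)\<^sup>2) + (\<Sum>i=2..r. lam i * (Y i)\<^sup>2) = 1"
    and "X 1 + (\<Sum>i=2..r. sqrt (real (d i)) * X i) = 1"
    and "\<And>i. i \<in> {2..r} \<Longrightarrow> Y i > 0"
    and "\<bar>X 1 - 1\<bar> < sqrt 2"
  using assms unfolding mem_DD_iff by blast+

lemma numer_pos:
  assumes "p \<in> DD r d lam" shows "numer p > 0"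
proof -
  have "\<bar>1 - fst p 1\<bar> < sqrt 2" using assms unfolding DD_def by auto
  then have "(1 - fst p 1)\<^sup>2 < 2"
    by (metis abs_ge_zero power2_abs real_sqrt_pow2 zero_le_numeral power_strict_mono pos2)
  then show ?thesis unfolding numer_def using N_ge_2 by (simp add: field_simps)
qed

lemma denom_pos: "(\<And>i. i \<in> {2..r} \<Longrightarrow> snd p i > 0) \<Longrightarrow> denom p > 0"
  unfolding denom_def using lam_pos by (intro prod_pos) force

lemma denom_eq:
  assumes "\<And>i. i \<in> {2..r} \<Longrightarrow> snd p i > 0"
  shows "denom p = (\<Prod>i=2..r. (lam i * (snd p i)\<^sup>2) powr (real (d i) / N))"
  unfolding denom_def
  by (rule prod.cong) (simp_all add: assms lam_pos powr_sqrt_mult[symmetric] times_divide_eq_right)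

lemma numer_line_has_real_derivative:
  "((\<lambda>t. numer (pt_line p v t)) has_real_derivative 2 / N * ((1 - fst p 1) * fst v 1)) (at 0)"
  unfolding numer_def pt_line_def using N_ge_2
  by (auto intro!: derivative_eq_intros simp: power2_eq_square field_simps)

lemma denom_line_has_real_derivative:
  assumes Y: "\<And>i. i \<in> {2..r} \<Longrightarrow> snd p i > 0"
  shows "((\<lambda>t. denom (pt_line p v t)) has_real_derivative
     denom p * (2 / N * (\<Sum>i=2..r. real (d i) / snd p i * snd v i))) (at 0)"
proof -
  define g where "g i t = (sqrt (lam i) * (snd p i + t * snd v i)) powr (2 * real (d i) / N)" for i t
  have g_pos: "g i 0 > 0" if "i \<in> {2..r}" for i
    using Y[OF that] lam_pos[OF that] unfolding g_def by simp
  have g_deriv: "(g i has_real_derivative g i 0 * (2 / N * (real (d i) / snd p i * snd v i))) (at 0)"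
    if i: "i \<in> {2..r}" for i
  proof -
    have lin: "((\<lambda>t. sqrt (lam i) * (snd p i + t * snd v i)) has_real_derivative sqrt (lam i) * snd v i) (at 0)"
      by (auto intro!: derivative_eq_intros)
    have "(g i has_real_derivative g i 0 * (0 * ln (sqrt (lam i) * snd p i)
        + sqrt (lam i) * snd v i * (2 * real (d i) / N) / (sqrt (lam i) * snd p i))) (at 0)"
      using DERIV_powr[OF lin _ DERIV_const, of "2 * real (d i) / N"] Y[OF i] lam_pos[OF i]
      unfolding g_def by simp
    moreover have "0 * ln (sqrt (lam i) * snd p i)
        + sqrt (lam i) * snd v i * (2 * real (d i) / N) / (sqrt (lam i) * snd p i)
        = 2 / N * (real (d i) / snd p i * snd v i)"
      using lam_pos[OF i] by simp
    ultimately show ?thesis by simp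
  qed
  have "((\<lambda>t. \<Prod>i=2..r. g i t) has_real_derivative
      (\<Prod>i=2..r. g i 0) * (\<Sum>i=2..r. g i 0 * (2 / N * (real (d i) / snd p i * snd v i)) / g i 0)) (at 0)"
    by (rule has_field_derivative_prod') (use g_pos g_deriv in \<open>auto simp: less_imp_neq[symmetric]\<close>)
  moreover have "(\<Prod>i=2..r. g i 0) = denom p" unfolding g_def denom_def by simp
  moreover have "(\<Sum>i=2..r. g i 0 * (2 / N * (real (d i) / snd p i * snd v i)) / g i 0)
      = 2 / N * (\<Sum>i=2..r. real (d i) / snd p i * snd v i)"
    unfolding sum_distrib_left using g_pos by (intro sum.cong) (auto simp: less_imp_neq[symmetric])
  moreover have "(\<lambda>t. denom (pt_line p v t)) = (\<lambda>t. \<Prod>i=2..r. g i t)"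
    unfolding denom_def g_def pt_line_def by simp
  ultimately show ?thesis by (simp only:)
qed

lemma FF_line_has_real_derivative:
  assumes Y: "\<And>i. i \<in> {2..r} \<Longrightarrow> snd p i > 0"
  shows "((\<lambda>t. FF r d lam (pt_line p v t)) has_real_derivative
     2 / (N * denom p) * ((1 - fst p 1) * fst v 1 - numer p * (\<Sum>i=2..r. real (d i) / snd p i * snd v i)))
     (at 0)"
proof -
  have "pt_line p v 0 = p" by (simp add: pt_line_def)
  then have "((\<lambda>t. numer (pt_line p v t) / denom (pt_line p v t)) has_real_derivative
      (2 / N * ((1 - fst p 1) * fst v 1) * denom p
        - numer p * (denom p * (2 / N * (\<Sum>i=2..r. real (d i) / snd p i * snd v i))))
      / (denom p * denom p)) (at 0)"
    using DERIV_divide[OF numer_line_has_real_derivative[of p v] denom_line_has_real_derivative[OF Y, of v]]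
      denom_pos[OF Y] by simp
  moreover have "(2 / N * ((1 - fst p 1) * fst v 1) * denom p
        - numer p * (denom p * (2 / N * (\<Sum>i=2..r. real (d i) / snd p i * snd v i))))
      / (denom p * denom p)
      = 2 / (N * denom p) * ((1 - fst p 1) * fst v 1 - numer p * (\<Sum>i=2..r. real (d i) / snd p i * snd v i))"
    using denom_pos[OF Y] N_ge_2 by (simp add: field_simps)
  ultimately show ?thesis by (simp add: FF_eq)
qed

lemma crit_on_level_iff:
  "crit_on_level r d lam (FF r d lam) p \<longleftrightarrow> p \<in> DD r d lam \<and>
    (\<forall>v\<in>coord_space r.
       (\<Sum>i=1..r. fst p i * fst v i) + (\<Sum>i=2..r. lam i * snd p i * snd v i) = 0 \<and>
       (\<Sum>i=1..r. sqrt (real (d i)) * fst v i) = 0 \<longrightarrow>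
       (1 - fst p 1) * fst v 1 = numer p * (\<Sum>i=2..r. real (d i) / snd p i * snd v i))"
proof (cases "p \<in> DD r d lam")
  case True
  then have Y: "\<And>i. i \<in> {2..r} \<Longrightarrow> snd p i > 0" unfolding DD_def by auto
  have "2 / (N * denom p) \<noteq> 0" using N_ge_2 denom_pos[OF Y] by simp
  moreover have "2 * a + 2 * b = 0 \<longleftrightarrow> a + b = 0" for a b :: real by linarith
  ultimately show ?thesis
    unfolding crit_on_level_def
    using has_real_derivative_zero_iff[OF LL_line_has_real_derivative]
      has_real_derivative_zero_iff[OF HH_line_has_real_derivative]
      has_real_derivative_zero_iff[OF FF_line_has_real_derivative[OF Y]] True
    by simp
qed (simp add: crit_on_level_def)

definition weight_power_prod :: real where
  "weight_power_prod = (\<Prod>i=2..r. (real (d i) / N) powr (real (d i) / N))"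

lemma weight_pos: "i \<in> {2..r} \<Longrightarrow> real (d i) / N > 0"
  using d_ge_2[of i] N_ge_2 by simp

lemma weights_sum: "(\<Sum>i=2..r. real (d i) / N) = 1"
  using N_ge_2 by (simp add: N_def sum_divide_distrib[symmetric])

lemma weight_power_prod_pos: "weight_power_prod > 0"
  unfolding weight_power_prod_def by (intro prod_pos) (metis weight_pos powr_gt_zero order_less_irrefl)

lemma denom_le:
  assumes Y: "\<And>i. i \<in> {2..r} \<Longrightarrow> Y i > 0"
  shows "denom (X, Y) \<le> (\<Sum>i=2..r. lam i * (Y i)\<^sup>2) * weight_power_prod"
proof -
  define w where "w i = real (d i) / N" for i
  define a where "a i = lam i * (Y i)\<^sup>2 / w i" for i
  have a_pos: "a i > 0" if "i \<in> {2..r}" for i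
    using Y[OF that] lam_pos[OF that] weight_pos[OF that] unfolding a_def
    by (intro divide_pos_pos mult_pos_pos zero_less_power) (auto simp: w_def)
  have aw: "a i * w i = lam i * (Y i)\<^sup>2" if "i \<in> {2..r}" for i
    using weight_pos[OF that] unfolding a_def w_def[symmetric] by simp
  then have "denom (X, Y) = (\<Prod>i=2..r. (a i * w i) powr w i)"
    using denom_eq[of "(X, Y)"] Y by (simp add: w_def)
  also have "\<dots> = (\<Prod>i=2..r. a i powr w i) * weight_power_prod"
    unfolding weight_power_prod_def w_def[symmetric] by (simp only: powr_mult prod.distrib)
  also have "\<dots> \<le> (\<Sum>i=2..r. w i * a i) * weight_power_prod"
    using weighted_arith_geom_mean[of "{2..r}" a w] a_pos weight_pos weights_sum weight_power_prod_pos
    by (intro mult_right_mono) (auto simp: w_def less_imp_le)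
  also have "(\<Sum>i=2..r. w i * a i) = (\<Sum>i=2..r. lam i * (Y i)\<^sup>2)"
    using aw by (intro sum.cong) (simp_all add: mult.commute)
  finally show ?thesis .
qed

lemma sum_lam_Y_le_numer:
  assumes "(X, Y) \<in> DD r d lam"
  shows "(\<Sum>i=2..r. lam i * (Y i)\<^sup>2) \<le> numer (X, Y)"
proof -
  have "1 - X 1 = (\<Sum>i=2..r. sqrt (real (d i)) * X i)"
    using DD_constraints(2)[OF assms] by simp
  then have "(1 - X 1)\<^sup>2 = (\<Sum>i=2..r. sqrt (real (d i)) * X i)\<^sup>2" by simp
  also have "\<dots> \<le> N * (\<Sum>i=2..r. (X i)\<^sup>2)"
    using Cauchy_Schwarz_ineq_sum[of "\<lambda>i. sqrt (real (d i))" X "{2..r}"] by (simp add: N_def)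
  finally have "(1 - X 1)\<^sup>2 / N \<le> (\<Sum>i=2..r. (X i)\<^sup>2)"
    using N_ge_2 by (simp add: divide_le_eq mult.commute)
  with DD_constraints(1)[OF assms] show ?thesis
    unfolding numer_def fst_conv using zero_le_power2[of "X 1"] by linarith
qed

lemma FF_lower_bound:
  assumes q: "q \<in> DD r d lam"
  shows "1 / weight_power_prod \<le> FF r d lam q"
proof -
  obtain X Y where XY: "q = (X, Y)" by fastforce
  define S where "S = (\<Sum>i=2..r. lam i * (Y i)\<^sup>2)"
  have Y: "\<And>i. i \<in> {2..r} \<Longrightarrow> Y i > 0" using DD_constraints(3) q unfolding XY by blast
  have "S > 0" unfolding S_def
    using Y lam_pos r_ge_2 by (intro sum_pos mult_pos_pos zero_less_power) auto
  then have "1 / weight_power_prod = S / (S * weight_power_prod)" by simp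
  also have "\<dots> \<le> numer q / (S * weight_power_prod)"
    using sum_lam_Y_le_numer q \<open>S > 0\<close> weight_power_prod_pos unfolding XY S_def
    by (intro divide_right_mono) auto
  also have "\<dots> \<le> numer q / denom q"
    using denom_le[OF Y] denom_pos[of q] Y numer_pos[OF q] \<open>S > 0\<close> weight_power_prod_pos
    unfolding XY S_def by (intro divide_left_mono) auto
  also have "\<dots> = FF r d lam q" by (simp add: FF_eq)
  finally show ?thesis .
qed

definition crit_X :: "nat \<Rightarrow> real" where
  "crit_X i = (if i \<in> {2..r} then sqrt (real (d i)) / N else 0)"

definition crit_Y :: "nat \<Rightarrow> real" where
  "crit_Y i = (if i \<in> {2..r} then sqrt ((N - 1) / N\<^sup>2 * real (d i) / lam i) else 0)"

lemma crit_Y_pos: "i \<in> {2..r} \<Longrightarrow> crit_Y i > 0"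
  using lam_pos[of i] d_ge_2[of i] N_ge_2 by (simp add: crit_Y_def)

lemma lam_crit_Y_sq: "i \<in> {2..r} \<Longrightarrow> lam i * (crit_Y i)\<^sup>2 = (N - 1) / N\<^sup>2 * real (d i)"
  using lam_pos[of i] N_ge_2 by (simp add: crit_Y_def)

lemma crit_XY_in_DD: "(crit_X, crit_Y) \<in> DD r d lam"
proof -
  have "(\<Sum>i=2..r. (crit_X i)\<^sup>2) = (\<Sum>i=2..r. 1 / N\<^sup>2 * real (d i))"
    by (intro sum.cong) (auto simp: crit_X_def power_divide)
  also have "\<dots> = 1 / N" unfolding sum_scaled_degrees using N_ge_2 by (simp add: power2_eq_square)
  finally have X: "(\<Sum>i=2..r. (crit_X i)\<^sup>2) = 1 / N" .
  have "(\<Sum>i=2..r. lam i * (crit_Y i)\<^sup>2) = (\<Sum>i=2..r. (N - 1) / N\<^sup>2 * real (d i))"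
    by (intro sum.cong) (simp_all add: lam_crit_Y_sq)
  also have "\<dots> = (N - 1) / N\<^sup>2 * N" by (rule sum_scaled_degrees)
  also have "\<dots> = (N - 1) / N" using N_ge_2 by (simp add: power2_eq_square)
  finally have Y: "(\<Sum>i=2..r. lam i * (crit_Y i)\<^sup>2) = (N - 1) / N" .
  have L: "(crit_X 1)\<^sup>2 + (\<Sum>i=2..r. (crit_X i)\<^sup>2) + (\<Sum>i=2..r. lam i * (crit_Y i)\<^sup>2) = 1"
    unfolding X Y using N_ge_2 by (simp add: crit_X_def field_simps)
  have "(\<Sum>i=2..r. sqrt (real (d i)) * crit_X i) = (\<Sum>i=2..r. real (d i) / N)"
    by (intro sum.cong) (auto simp: crit_X_def)
  then have H: "crit_X 1 + (\<Sum>i=2..r. sqrt (real (d i)) * crit_X i) = 1"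
    unfolding weights_sum by (simp add: crit_X_def)
  have "(crit_X, crit_Y) \<in> coord_space r" by (simp add: coord_space_def crit_X_def crit_Y_def)
  with L H show ?thesis unfolding mem_DD_iff using crit_Y_pos by (simp add: crit_X_def)
qed

lemma FF_crit_XY: "FF r d lam (crit_X, crit_Y) = 1 / weight_power_prod"
proof -
  have "denom (crit_X, crit_Y) = (\<Prod>i=2..r. (lam i * (crit_Y i)\<^sup>2) powr (real (d i) / N))"
    using denom_eq[of "(crit_X, crit_Y)"] crit_Y_pos by simp
  also have "\<dots> = (\<Prod>i=2..r. ((N - 1) / N * (real (d i) / N)) powr (real (d i) / N))"
  proof (rule prod.cong)
    fix i assume "i \<in> {2..r}"
    then have "lam i * (crit_Y i)\<^sup>2 = (N - 1) / N * (real (d i) / N)"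
      using lam_crit_Y_sq by (simp add: power2_eq_square)
    then show "(lam i * (crit_Y i)\<^sup>2) powr (real (d i) / N) = ((N - 1) / N * (real (d i) / N)) powr (real (d i) / N)"
      by simp
  qed simp
  also have "\<dots> = (\<Prod>i=2..r. ((N - 1) / N) powr (real (d i) / N)) * weight_power_prod"
    unfolding weight_power_prod_def powr_mult prod.distrib ..
  also have "\<dots> = (N - 1) / N * weight_power_prod"
    using N_ge_2 by (simp add: powr_sum[symmetric] weights_sum)
  finally have "denom (crit_X, crit_Y) = (N - 1) / N * weight_power_prod" .
  moreover have "numer (crit_X, crit_Y) = (N - 1) / N"
    using N_ge_2 by (simp add: numer_def crit_X_def field_simps)
  ultimately show ?thesis
    using N_ge_2 weight_power_prod_pos by (simp add: FF_eq)
qed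

lemma crit_on_level_crit_XY: "crit_on_level r d lam (FF r d lam) (crit_X, crit_Y)"
  unfolding crit_on_level_iff fst_conv snd_conv
proof (intro conjI crit_XY_in_DD ballI impI)
  fix v :: pt
  assume tangent: "(\<Sum>i=1..r. crit_X i * fst v i) + (\<Sum>i=2..r. lam i * crit_Y i * snd v i) = 0 \<and>
    (\<Sum>i=1..r. sqrt (real (d i)) * fst v i) = 0"
  define T where "T = (\<Sum>i=2..r. real (d i) / crit_Y i * snd v i)"
  have "(\<Sum>i=2..r. crit_X i * fst v i) = (\<Sum>i=2..r. sqrt (real (d i)) * fst v i / N)"
    by (intro sum.cong) (auto simp: crit_X_def)
  then have X: "(\<Sum>i=1..r. crit_X i * fst v i) = (\<Sum>i=2..r. sqrt (real (d i)) * fst v i) / N"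
    unfolding sum_split_first by (simp add: crit_X_def sum_divide_distrib)
  have "lam i * crit_Y i = (N - 1) / N\<^sup>2 * (real (d i) / crit_Y i)" if "i \<in> {2..r}" for i
  proof -
    have "lam i * crit_Y i = lam i * (crit_Y i)\<^sup>2 / crit_Y i"
      using crit_Y_pos[OF that] by (simp add: power2_eq_square)
    then show ?thesis using lam_crit_Y_sq[OF that] by simp
  qed
  then have "(\<Sum>i=2..r. lam i * crit_Y i * snd v i) = (\<Sum>i=2..r. (N - 1) / N\<^sup>2 * (real (d i) / crit_Y i * snd v i))"
    by (intro sum.cong) simp_all
  also have "\<dots> = (N - 1) / N\<^sup>2 * T" by (simp add: T_def sum_distrib_left)
  finally have Y: "(\<Sum>i=2..r. lam i * crit_Y i * snd v i) = (N - 1) / N\<^sup>2 * T" .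
  define W where "W = (\<Sum>i=2..r. sqrt (real (d i)) * fst v i)"
  have "W / N + (N - 1) / N\<^sup>2 * T = 0" using tangent unfolding X Y W_def by simp
  moreover have "W + (N - 1) / N * T = N * (W / N + (N - 1) / N\<^sup>2 * T)"
    using N_ge_2 by (simp add: field_simps power2_eq_square)
  moreover have "fst v 1 + W = 0" using tangent unfolding W_def sum_split_first d_1 by simp
  ultimately have "fst v 1 = (N - 1) / N * T" by simp
  then show "(1 - crit_X 1) * fst v 1 = numer (crit_X, crit_Y) * T"
    using N_ge_2 by (simp add: numer_def crit_X_def field_simps)
qed

lemma critical_tangent_eq:
  assumes "crit_on_level r d lam (FF r d lam) (X, Y)" "(VX, VY) \<in> coord_space r"
    and "(\<Sum>i=1..r. X i * VX i) + (\<Sum>i=2..r. lam i * Y i * VY i) = 0"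
    and "(\<Sum>i=1..r. sqrt (real (d i)) * VX i) = 0"
  shows "(1 - X 1) * VX 1 = numer (X, Y) * (\<Sum>i=2..r. real (d i) / Y i * VY i)"
  using assms unfolding crit_on_level_iff by auto

lemma critical_Y_ratio:
  assumes crit: "crit_on_level r d lam (FF r d lam) (X, Y)" and i: "i \<in> {2..r}"
  shows "lam i * (Y i)\<^sup>2 * real (d 2) = lam 2 * (Y 2)\<^sup>2 * real (d i)"
proof -
  have DD: "(X, Y) \<in> DD r d lam" using crit unfolding crit_on_level_def by blast
  have i2: "2 \<in> {2..r}" using r_ge_2 by simp
  have pos: "Y i > 0" "Y 2 > 0" "lam i > 0" "lam 2 > 0"
    using DD_constraints(3)[OF DD] lam_pos i i2 by auto
  \<comment> \<open>Trade Y i against Y 2 tangentially to the level set of L.\<close>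
  define VY where "VY k = (if k = i then 1 / (lam i * Y i) else 0) + (if k = 2 then - 1 / (lam 2 * Y 2) else 0)" for k
  have "(1 - X 1) * 0 = numer (X, Y) * (\<Sum>k=2..r. real (d k) / Y k * VY k)"
  proof (rule critical_tangent_eq[OF crit])
    show "((\<lambda>_. 0), VY) \<in> coord_space r" using i by (auto simp: coord_space_def VY_def)
    show "(\<Sum>k=1..r. X k * 0) + (\<Sum>k=2..r. lam k * Y k * VY k) = 0"
      unfolding VY_def sum_mult_two_deltas[OF finite_atLeastAtMost i i2] using pos by simp
  qed simp
  then have "real (d i) / Y i * (1 / (lam i * Y i)) + real (d 2) / Y 2 * (- 1 / (lam 2 * Y 2)) = 0"
    using numer_pos[OF DD] unfolding VY_def sum_mult_two_deltas[OF finite_atLeastAtMost i i2] by simp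
  then show ?thesis using pos by (simp add: field_simps power2_eq_square)
qed

lemma critical_pair_relation:
  assumes crit: "crit_on_level r d lam (FF r d lam) (X, Y)" and i: "i \<in> {1..r}"
  shows "(1 - X 1) * (if i = 1 then sqrt (real (d 2)) else 0) * (lam 2 * (Y 2)\<^sup>2)
       = numer (X, Y) * real (d 2) * (X 2 * sqrt (real (d i)) - X i * sqrt (real (d 2)))"
proof -
  have DD: "(X, Y) \<in> DD r d lam" using crit unfolding crit_on_level_def by blast
  have i2: "2 \<in> {2..r}" "2 \<in> {1..r}" using r_ge_2 by auto
  have pos: "Y 2 > 0" "lam 2 > 0" using DD_constraints(3)[OF DD] lam_pos i2 by auto
  \<comment> \<open>Trade X i against X 2 inside the kernel of dH; the Y 2 component w restores dL = 0.\<close>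
  define w where "w = (X 2 * sqrt (real (d i)) - X i * sqrt (real (d 2))) / (lam 2 * Y 2)"
  define VX where "VX k = (if k = i then sqrt (real (d 2)) else 0) + (if k = 2 then - sqrt (real (d i)) else 0)" for k
  define VY where "VY k = (if k = 2 then w else 0)" for k :: nat
  have tangent: "(1 - X 1) * VX 1 = numer (X, Y) * (\<Sum>k=2..r. real (d k) / Y k * VY k)"
  proof (rule critical_tangent_eq[OF crit])
    show "(VX, VY) \<in> coord_space r" using i r_ge_2 by (auto simp: coord_space_def VX_def VY_def)
    show "(\<Sum>k=1..r. X k * VX k) + (\<Sum>k=2..r. lam k * Y k * VY k) = 0"
      unfolding VX_def VY_def sum_mult_two_deltas[OF finite_atLeastAtMost i i2(2)] sum_mult_delta[OF finite_atLeastAtMost i2(1)]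
      using pos by (simp add: w_def)
    show "(\<Sum>k=1..r. sqrt (real (d k)) * VX k) = 0"
      unfolding VX_def sum_mult_two_deltas[OF finite_atLeastAtMost i i2(2)] by simp
  qed
  have "VX 1 = (if i = 1 then sqrt (real (d 2)) else 0)" by (simp add: VX_def)
  moreover have "(\<Sum>k=2..r. real (d k) / Y k * VY k) = real (d 2) / Y 2 * w"
    unfolding VY_def by (rule sum_mult_delta[OF finite_atLeastAtMost i2(1)])
  ultimately have "(1 - X 1) * (if i = 1 then sqrt (real (d 2)) else 0) = numer (X, Y) * (real (d 2) / Y 2 * w)"
    using tangent by (simp only:)
  then have "(1 - X 1) * (if i = 1 then sqrt (real (d 2)) else 0) * (lam 2 * (Y 2)\<^sup>2)
      = numer (X, Y) * (real (d 2) / Y 2 * w * (lam 2 * (Y 2)\<^sup>2))"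
    by (simp only: mult.assoc)
  also have "real (d 2) / Y 2 * w * (lam 2 * (Y 2)\<^sup>2)
      = real (d 2) * (X 2 * sqrt (real (d i)) - X i * sqrt (real (d 2)))"
    using pos unfolding w_def by (simp add: power2_eq_square)
  finally show ?thesis by (simp only: mult.assoc)
qed

lemma critical_shape:
  assumes crit: "crit_on_level r d lam (FF r d lam) (X, Y)"
  obtains s t where "s > 0"
    and "\<And>i. i \<in> {2..r} \<Longrightarrow> X i = t * sqrt (real (d i))"
    and "\<And>i. i \<in> {2..r} \<Longrightarrow> lam i * (Y i)\<^sup>2 = s * real (d i)"
    and "(1 - X 1) * s = numer (X, Y) * (t - X 1)"
proof
  have DD: "(X, Y) \<in> DD r d lam" using crit unfolding crit_on_level_def by blast
  have i2: "2 \<in> {2..r}" using r_ge_2 by simp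
  have pos: "Y 2 > 0" "lam 2 > 0" "real (d 2) \<ge> 2" "numer (X, Y) > 0"
    using DD_constraints(3)[OF DD] lam_pos d_ge_2 i2 numer_pos[OF DD] by auto
  define t where "t = X 2 / sqrt (real (d 2))"
  define s where "s = lam 2 * (Y 2)\<^sup>2 / real (d 2)"
  show "s > 0" using pos by (simp add: s_def)
  show "X i = t * sqrt (real (d i))" if i: "i \<in> {2..r}" for i
  proof -
    have "0 = numer (X, Y) * real (d 2) * (X 2 * sqrt (real (d i)) - X i * sqrt (real (d 2)))"
      using critical_pair_relation[OF crit, of i] i by simp
    then show ?thesis using pos by (simp add: t_def field_simps)
  qed
  show "lam i * (Y i)\<^sup>2 = s * real (d i)" if "i \<in> {2..r}" for i
    using critical_Y_ratio[OF crit that] pos by (simp add: s_def field_simps)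
  have "(1 - X 1) * sqrt (real (d 2)) * (lam 2 * (Y 2)\<^sup>2) = numer (X, Y) * real (d 2) * (X 2 - X 1 * sqrt (real (d 2)))"
    using critical_pair_relation[OF crit, of 1] r_ge_2 d_1 by simp
  then show "(1 - X 1) * s = numer (X, Y) * (t - X 1)"
    using pos by (simp add: s_def t_def field_simps power2_eq_square)
qed

lemma critical_coordinates:
  assumes crit: "crit_on_level r d lam (FF r d lam) (X, Y)"
  shows "X 1 = 0 \<and> (\<forall>i\<in>{2..r}. X i = sqrt (real (d i)) / N \<and> lam i * (Y i)\<^sup>2 = (N - 1) / N\<^sup>2 * real (d i))"
proof -
  obtain s t where s: "s > 0" and X: "\<And>i. i \<in> {2..r} \<Longrightarrow> X i = t * sqrt (real (d i))"
    and Y: "\<And>i. i \<in> {2..r} \<Longrightarrow> lam i * (Y i)\<^sup>2 = s * real (d i)"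
    and rel: "(1 - X 1) * s = numer (X, Y) * (t - X 1)"
    using critical_shape[OF crit] by metis
  have DD: "(X, Y) \<in> DD r d lam" using crit unfolding crit_on_level_def by blast
  have "(\<Sum>i=2..r. sqrt (real (d i)) * X i) = (\<Sum>i=2..r. t * real (d i))"
    by (intro sum.cong) (simp_all add: X)
  then have t: "t = (1 - X 1) / N"
    using DD_constraints(2)[OF DD] N_ge_2 unfolding sum_scaled_degrees by (simp add: field_simps)
  have "(\<Sum>i=2..r. (X i)\<^sup>2) = (\<Sum>i=2..r. t\<^sup>2 * real (d i))"
    by (intro sum.cong) (simp_all add: X power_mult_distrib)
  moreover have "(\<Sum>i=2..r. lam i * (Y i)\<^sup>2) = (\<Sum>i=2..r. s * real (d i))"
    by (intro sum.cong) (simp_all add: Y)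
  ultimately have s_eq: "s = (1 - (X 1)\<^sup>2 - t\<^sup>2 * N) / N"
    using DD_constraints(1)[OF DD] N_ge_2 unfolding sum_scaled_degrees by (simp add: field_simps)
  \<comment> \<open>Eliminating t and s from rel leaves a quadratic in X 1 with roots 0 and 1 - N;
    the condition |X 1 - 1| < sqrt 2 of DD excludes the second root.\<close>
  have "N * ((1 - X 1) * s - numer (X, Y) * (t - X 1)) = X 1 * (N - 1 + X 1)"
    unfolding s_eq t numer_def using N_ge_2 by (simp add: field_simps power2_eq_square)
  then have "X 1 * (N - 1 + X 1) = 0" using rel by simp
  moreover have "N - 1 + X 1 > 0"
  proof -
    have "sqrt 2 < 2" using real_sqrt_less_iff[of 2 4] real_sqrt_four by simp
    then show ?thesis using DD_constraints(4)[OF DD] N_ge_2 by linarith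
  qed
  ultimately have X1: "X 1 = 0" by simp
  moreover have "s = (N - 1) / N\<^sup>2"
    using X1 N_ge_2 unfolding s_eq t by (simp add: field_simps power2_eq_square)
  ultimately show ?thesis using X Y t by simp
qed

lemma critical_eq_crit_XY:
  assumes crit: "crit_on_level r d lam (FF r d lam) q"
  shows "q = (crit_X, crit_Y)"
proof -
  obtain X Y where q: "q = (X, Y)" by fastforce
  have DD: "(X, Y) \<in> DD r d lam" using crit unfolding q crit_on_level_def by blast
  then have outside: "\<And>i. i \<notin> {1..r} \<Longrightarrow> X i = 0" "\<And>i. i \<notin> {2..r} \<Longrightarrow> Y i = 0"
    unfolding DD_def coord_space_def by auto
  have coords: "X 1 = 0" "\<And>i. i \<in> {2..r} \<Longrightarrow> X i = sqrt (real (d i)) / N"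
    "\<And>i. i \<in> {2..r} \<Longrightarrow> lam i * (Y i)\<^sup>2 = (N - 1) / N\<^sup>2 * real (d i)"
    using critical_coordinates[OF crit[unfolded q]] by auto
  have "X = crit_X"
  proof
    fix i show "X i = crit_X i"
      using coords(1) coords(2)[of i] outside(1)[of i] by (cases "i = 1") (auto simp: crit_X_def)
  qed
  moreover have "Y = crit_Y"
  proof
    fix i show "Y i = crit_Y i"
    proof (cases "i \<in> {2..r}")
      case True
      then have "(Y i)\<^sup>2 = (N - 1) / N\<^sup>2 * real (d i) / lam i"
        using coords(3)[OF True] lam_pos[OF True] N_ge_2 by (simp add: field_simps)
      then show ?thesis
        using DD_constraints(3)[OF DD True] True by (simp add: crit_Y_def real_sqrt_unique)
    qed (auto simp: outside crit_Y_def)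
  qed
  ultimately show ?thesis using q by simp
qed

end

theorem lemma4p4:
  fixes r :: nat and d :: "nat \<Rightarrow> nat" and lam :: "nat \<Rightarrow> real"
  assumes "r \<ge> 2"
    and "d 1 = 1" and "lam 1 = 0"
    and "\<forall>i\<in>{2..r}. d i \<ge> 2 \<and> lam i > 0"
  shows "\<exists>p. crit_on_level r d lam (FF r d lam) p
            \<and> (\<forall>q. crit_on_level r d lam (FF r d lam) q \<longrightarrow> q = p)
            \<and> (\<forall>q\<in>DD r d lam. FF r d lam p \<le> FF r d lam q)"
proof -
  interpret level_set_data r d lam
    using assms by unfold_locales auto
  have "crit_on_level r d lam (FF r d lam) (crit_X, crit_Y)"
    by (rule crit_on_level_crit_XY)
  moreover have "\<forall>q. crit_on_level r d lam (FF r d lam) q \<longrightarrow> q = (crit_X, crit_Y)"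
    using critical_eq_crit_XY by blast
  moreover have "\<forall>q\<in>DD r d lam. FF r d lam (crit_X, crit_Y) \<le> FF r d lam q"
    using FF_crit_XY FF_lower_bound by simp
  ultimately show ?thesis by blast
qed

end
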